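(* Suppose the polytope $P_o=\mathrm{conv}\{v_1,\dots,v_{d+1}\}\subseteq\mathbb{R}^d$ contains the Euclidean ball $B_{4d^8}(0)$. Then there exist $d+1$ integer points $g_1,\dots,g_{d+1}\in\mathbb{Z}^d\cap\frac{2}{d^2}P_o$ (where $\frac{2}{d^2}P_o=\{\frac{2}{d^2}p:p\in P_o\}$) such that: (1) if $(\lambda_1,\dots,\lambda_{d+1})\in\Delta^{d+1}$ satisfies $\sum_i\lambda_i v_i=0$, then there exists $(\lambda_1',\dots,\lambda_{d+1}')\in\Delta^{d+1}$ with $\sum_i\lambda_i' g_i=0$ and $\frac12\lambda_i'\le\lambda_i\le2\lambda_i'$ for all $i$; (2) for every $i\in[d+1]$ there exists $(\lambda^i_1,\dots,\lambda^i_{d+1})\in\Delta^{d+1}$ with $\lambda^i_i\ge\frac{1}{2d^2}$ and $$g_i=\lambda^i_i v_i+\sum_{j\ne i}\lambda^i_j g_j.$$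
   Context: $\Delta^{m}$ denotes the probability simplex $\{\lambda\in\mathbb{R}^m_{\ge0}:\sum_i\lambda_i=1\}$; $B_r(c)$ denotes the Euclidean ball of radius $r$ centered at $c$. *)

theory Defs
  imports "HOL-Analysis.Analysis"
begin

text \<open>Probability simplex on the index set {1..m}: weights indexed by 1..m,
  nonnegative, summing to 1 (values outside {1..m} are irrelevant).\<close>
definition std_simplex :: "nat \<Rightarrow> (nat \<Rightarrow> real) set" where
  "std_simplex m = {l. (\<forall>i\<in>{1..m}. 0 \<le> l i) \<and> (\<Sum>i=1..m. l i) = 1}"

definition int_point :: "real^'n \<Rightarrow> bool" where
  "int_point x \<longleftrightarrow> (\<forall>k. x $ k \<in> \<int>)"

end

theory Submission
  imports Defs
begin

text \<open>Let \<open>t = 1 / (2 d\<^sup>2)\<close> and obtain \<open>g\<^sub>i\<close> by rounding \<open>t v\<^sub>i\<close> coordinatewise, so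
  \<open>g\<^sub>i = t v\<^sub>i + e\<^sub>i\<close> with \<open>\<parallel>e\<^sub>i\<parallel> \<le> d / 2\<close>. Because \<open>P\<^sub>o\<close> contains the ball of radius \<open>R = 4 d\<^sup>8\<close>,
  the \<open>v\<^sub>i\<close> are affinely independent and the barycentric coordinates \<open>c(w)\<close> of any point \<open>w\<close>
  deviate from those of the origin at most by the factor \<open>\<parallel>w\<parallel> / R\<close>; in particular they are
  nonnegative for \<open>\<parallel>w\<parallel> \<le> R\<close>. Both convex relations required of the \<open>g\<^sub>j\<close> are built from
  weights \<open>c(w)\<close>, where \<open>w\<close> solves an equation \<open>t w = F(w)\<close> and \<open>F(w)\<close> is a combination of
  the errors \<open>e\<^sub>j\<close> with weights bounded by \<open>2\<close>. Since \<open>\<parallel>F(w)\<parallel> \<le> 3 d / 2 \<le> t R\<close>,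
  Brouwer's fixed point theorem provides such a \<open>w\<close> in the ball of radius \<open>R\<close>.\<close>

lemma affine_independent_coefficients_eq:
  fixes v :: "'i \<Rightarrow> 'a::real_vector"
  assumes "finite I" "inj_on v I" "\<not> affine_dependent (v ` I)"
    and "sum a I = sum b I" "(\<Sum>i\<in>I. a i *\<^sub>R v i) = (\<Sum>i\<in>I. b i *\<^sub>R v i)" "i \<in> I"
  shows "a i = b i"
proof (rule ccontr)
  assume ne: "a i \<noteq> b i"
  define U where "U = (\<lambda>x. a (inv_into I v x) - b (inv_into I v x))"
  have "sum U (v ` I) = 0" "(\<Sum>x\<in>v ` I. U x *\<^sub>R x) = 0" "U (v i) \<noteq> 0"
    using assms ne by (simp_all add: U_def sum.reindex sum_subtractf scaleR_diff_left)
  then have "affine_dependent (v ` I)"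
    using assms(1,6) by (subst affine_dependent_explicit_finite) auto
  with assms(3) show False ..
qed

lemma convex_hull_inj_on_coefficients:
  fixes v :: "'i \<Rightarrow> 'a::real_vector"
  assumes "finite I" "inj_on v I" "y \<in> convex hull (v ` I)"
  obtains \<mu> where "\<forall>i\<in>I. 0 \<le> \<mu> i" "sum \<mu> I = 1" "(\<Sum>i\<in>I. \<mu> i *\<^sub>R v i) = y"
proof -
  obtain u where "\<forall>x\<in>v ` I. 0 \<le> u x" "sum u (v ` I) = 1" "(\<Sum>x\<in>v ` I. u x *\<^sub>R x) = y"
    using assms(1,3) by (auto simp: convex_hull_finite)
  with assms(2) show thesis
    by (intro that[of "u \<circ> v"]) (simp_all add: sum.reindex)
qed

lemma simplex_containing_ball_affine_independent:
  fixes v :: "'i \<Rightarrow> 'a::euclidean_space"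
  assumes "finite I" "card I = DIM('a) + 1" "ball a R \<subseteq> convex hull (v ` I)" "R > 0"
  shows "inj_on v I" "\<not> affine_dependent (v ` I)"
proof -
  have "int DIM('a) \<le> aff_dim (v ` I)"
    using aff_dim_subset[OF assms(3)] assms(4) by (simp add: aff_dim_open aff_dim_convex_hull)
  moreover have "aff_dim (v ` I) \<le> int (card (v ` I)) - 1"
    using assms(1) by (intro aff_dim_le_card) simp
  moreover have "card (v ` I) \<le> card I"
    by (rule card_image_le[OF assms(1)])
  ultimately have card: "card (v ` I) = card I" "aff_dim (v ` I) = int (card (v ` I)) - 1"
    using assms(2) by linarith+
  show "inj_on v I"
    using card(1) assms(1) by (simp add: eq_card_imp_inj_on)
  show "\<not> affine_dependent (v ` I)"
    using card(2) assms(1) by (simp add: affine_independent_iff_card)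
qed

lemma affine_coefficients_antipodal:
  fixes v :: "'i \<Rightarrow> 'a::real_vector"
  assumes "finite I" "inj_on v I" "\<not> affine_dependent (v ` I)"
    and \<mu>: "sum \<mu> I = 1" "(\<Sum>i\<in>I. \<mu> i *\<^sub>R v i) = p"
    and \<nu>: "sum \<nu> I = 1" "(\<Sum>i\<in>I. \<nu> i *\<^sub>R v i) = -p"
    and lam: "sum lam I = 1" "(\<Sum>i\<in>I. lam i *\<^sub>R v i) = 0"
    and "i \<in> I"
  shows "\<mu> i + \<nu> i = 2 * lam i"
proof (rule affine_independent_coefficients_eq[OF assms(1-3) _ _ \<open>i \<in> I\<close>])
  show "(\<Sum>i\<in>I. \<mu> i + \<nu> i) = (\<Sum>i\<in>I. 2 * lam i)"
    by (simp add: sum.distrib \<mu> \<nu> lam flip: sum_distrib_left)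
  have "(\<Sum>i\<in>I. (\<mu> i + \<nu> i) *\<^sub>R v i) = (\<Sum>i\<in>I. \<mu> i *\<^sub>R v i) + (\<Sum>i\<in>I. \<nu> i *\<^sub>R v i)"
    by (simp add: scaleR_add_left sum.distrib)
  moreover have "(\<Sum>i\<in>I. (2 * lam i) *\<^sub>R v i) = 2 *\<^sub>R (\<Sum>i\<in>I. lam i *\<^sub>R v i)"
    by (simp add: scaleR_sum_right)
  ultimately show "(\<Sum>i\<in>I. (\<mu> i + \<nu> i) *\<^sub>R v i) = (\<Sum>i\<in>I. (2 * lam i) *\<^sub>R v i)"
    by (simp add: \<mu> \<nu> lam)
qed

lemma affine_coefficients_near_center:
  fixes v :: "'i \<Rightarrow> 'a::real_normed_vector"
  assumes fin: "finite I" and inj: "inj_on v I" and indep: "\<not> affine_dependent (v ` I)"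
    and hull: "cball 0 R \<subseteq> convex hull (v ` I)" and "R > 0"
    and lam: "sum lam I = 1" "(\<Sum>i\<in>I. lam i *\<^sub>R v i) = 0"
  obtains a where "sum a I = 1" "(\<Sum>i\<in>I. a i *\<^sub>R v i) = w"
    "\<forall>i\<in>I. \<bar>a i - lam i\<bar> \<le> lam i * norm w / R"
proof (cases "w = 0")
  case True
  then show thesis using lam by (intro that[of lam]) auto
next
  case False
  define s where "s = norm w / R"
  have "s > 0" using False \<open>R > 0\<close> by (simp add: s_def)
  define p where "p = (1 / s) *\<^sub>R w"
  have "norm p = R" "s *\<^sub>R p = w" using False \<open>R > 0\<close> by (simp_all add: p_def s_def)
  then have "p \<in> convex hull (v ` I)" "-p \<in> convex hull (v ` I)" using hull by auto
  obtain \<mu> where \<mu>: "\<forall>i\<in>I. 0 \<le> \<mu> i" "sum \<mu> I = 1" "(\<Sum>i\<in>I. \<mu> i *\<^sub>R v i) = p"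
    using convex_hull_inj_on_coefficients[OF fin inj \<open>p \<in> convex hull (v ` I)\<close>] .
  obtain \<nu> where \<nu>: "\<forall>i\<in>I. 0 \<le> \<nu> i" "sum \<nu> I = 1" "(\<Sum>i\<in>I. \<nu> i *\<^sub>R v i) = -p"
    using convex_hull_inj_on_coefficients[OF fin inj \<open>-p \<in> convex hull (v ` I)\<close>] .
  have avg: "\<mu> i + \<nu> i = 2 * lam i" if "i \<in> I" for i
    using affine_coefficients_antipodal[OF fin inj indep \<mu>(2,3) \<nu>(2,3) lam that] .
  define a where "a i = (1 + s) / 2 * \<mu> i + (1 - s) / 2 * \<nu> i" for i
  show thesis
  proof (rule that[of a])
    have "sum a I = (1 + s) / 2 * sum \<mu> I + (1 - s) / 2 * sum \<nu> I"
      by (simp add: a_def sum.distrib sum_distrib_left)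
    then show "sum a I = 1" by (simp add: \<mu> \<nu> field_simps)
    have "(\<Sum>i\<in>I. a i *\<^sub>R v i)
        = ((1 + s) / 2) *\<^sub>R (\<Sum>i\<in>I. \<mu> i *\<^sub>R v i) + ((1 - s) / 2) *\<^sub>R (\<Sum>i\<in>I. \<nu> i *\<^sub>R v i)"
      unfolding scaleR_sum_right by (simp add: a_def scaleR_add_left sum.distrib)
    also have "\<dots> = ((1 + s) / 2) *\<^sub>R p - ((1 - s) / 2) *\<^sub>R p"
      by (simp add: \<mu> \<nu>)
    also have "\<dots> = s *\<^sub>R p" by (simp add: field_simps flip: scaleR_diff_left)
    finally show "(\<Sum>i\<in>I. a i *\<^sub>R v i) = w" using \<open>s *\<^sub>R p = w\<close> by simp
    show "\<forall>i\<in>I. \<bar>a i - lam i\<bar> \<le> lam i * norm w / R"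
    proof
      fix i assume "i \<in> I"
      have "0 \<le> \<mu> i" "0 \<le> \<nu> i" using \<mu>(1) \<nu>(1) \<open>i \<in> I\<close> by auto
      have "a i - lam i = s / 2 * (\<mu> i - \<nu> i)"
        using avg[OF \<open>i \<in> I\<close>] by (simp add: a_def field_simps)
      then have "\<bar>a i - lam i\<bar> = s / 2 * \<bar>\<mu> i - \<nu> i\<bar>"
        using \<open>s > 0\<close> by (simp only: abs_mult abs_of_pos)
      also have "\<dots> \<le> s / 2 * (2 * lam i)"
        using \<open>0 \<le> \<mu> i\<close> \<open>0 \<le> \<nu> i\<close> avg[OF \<open>i \<in> I\<close>] \<open>s > 0\<close> by (intro mult_left_mono) auto
      finally show "\<bar>a i - lam i\<bar> \<le> lam i * norm w / R"
        by (simp add: s_def mult.commute)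
    qed
  qed
qed

lemma norm_sum_scaleR_le:
  fixes e :: "'i \<Rightarrow> 'a::real_normed_vector"
  assumes "\<forall>j\<in>J. 0 \<le> a j" "\<forall>j\<in>J. norm (e j) \<le> M"
  shows "norm (\<Sum>j\<in>J. a j *\<^sub>R e j) \<le> sum a J * M"
proof -
  have "norm (\<Sum>j\<in>J. a j *\<^sub>R e j) \<le> (\<Sum>j\<in>J. a j * M)"
    using assms by (intro order_trans[OF norm_sum] sum_mono) (simp add: mult_left_mono)
  then show ?thesis by (simp add: sum_distrib_right)
qed

lemma brouwer_scaled_fixed_point:
  fixes F :: "'a::euclidean_space \<Rightarrow> 'a"
  assumes "0 < t" "0 < r" "continuous_on (cball 0 r) F" "\<forall>w\<in>cball 0 r. norm (F w) \<le> t * r"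
  obtains w where "norm w \<le> r" "t *\<^sub>R w = F w"
proof -
  have "norm ((1 / t) *\<^sub>R F w) \<le> r" if "w \<in> cball 0 r" for w
    using assms(1,4) that by (simp add: divide_le_eq mult.commute)
  then have "(\<lambda>w. (1 / t) *\<^sub>R F w) \<in> cball 0 r \<rightarrow> cball 0 r" by simp
  moreover have "continuous_on (cball 0 r) (\<lambda>w. (1 / t) *\<^sub>R F w)"
    by (intro continuous_intros assms(3))
  ultimately obtain w where "w \<in> cball 0 r" and fixed: "(1 / t) *\<^sub>R F w = w"
    using brouwer_ball[OF assms(2)] by blast
  have "t *\<^sub>R w = t *\<^sub>R ((1 / t) *\<^sub>R F w)" by (simp only: fixed)
  also have "\<dots> = F w" using assms(1) by simp
  finally show thesis using \<open>w \<in> cball 0 r\<close> by (intro that) auto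
qed

locale barycentric_chart =
  fixes I :: "'i set" and v :: "'i \<Rightarrow> 'a::euclidean_space"
    and c :: "'a \<Rightarrow> 'i \<Rightarrow> real" and R :: real
  assumes finite_index: "finite I" and radius_pos: "0 < R"
    and sum_coord: "sum (c w) I = 1"
    and coord_combination: "(\<Sum>i\<in>I. c w i *\<^sub>R v i) = w"
    and coord_deviation: "i \<in> I \<Longrightarrow> \<bar>c w i - c 0 i\<bar> \<le> c 0 i * norm w / R"
    and continuous_coord: "i \<in> I \<Longrightarrow> continuous_on UNIV (\<lambda>w. c w i)"

lemma barycentric_chart_exists:
  fixes v :: "'i \<Rightarrow> 'a::euclidean_space"
  assumes fin: "finite I" and inj: "inj_on v I" and indep: "\<not> affine_dependent (v ` I)"
    and ball: "ball 0 R \<subseteq> convex hull (v ` I)" and "0 < R"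
  obtains c where "barycentric_chart I v c R"
proof -
  have "closed (convex hull (v ` I))"
    using fin by (simp add: compact_imp_closed finite_imp_compact_convex_hull)
  then have hull: "cball 0 R \<subseteq> convex hull (v ` I)"
    using closure_minimal[OF ball] \<open>0 < R\<close> by simp
  have "0 \<in> convex hull (v ` I)" using ball \<open>0 < R\<close> by auto
  then obtain lam where lam: "\<forall>i\<in>I. 0 \<le> lam i" "sum lam I = 1" "(\<Sum>i\<in>I. lam i *\<^sub>R v i) = 0"
    using convex_hull_inj_on_coefficients[OF fin inj] by blast
  define near where "near w a \<longleftrightarrow> sum a I = 1 \<and> (\<Sum>i\<in>I. a i *\<^sub>R v i) = w \<and>
    (\<forall>i\<in>I. \<bar>a i - lam i\<bar> \<le> lam i * norm w / R)" for w a
  define c where "c w = (SOME a. near w a)" for w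
  have "\<exists>a. near w a" for w
    using affine_coefficients_near_center[OF fin inj indep hull \<open>0 < R\<close> lam(2,3), of w]
    unfolding near_def by blast
  then have c: "near w (c w)" for w
    unfolding c_def by (rule someI_ex)
  have c0: "c 0 i = lam i" if "i \<in> I" for i
    using c[of 0] that by (simp add: near_def)
  have "\<bar>c x i - c y i\<bar> \<le> lam i * norm (x - y) / R" if "i \<in> I" for x y i
  proof -
    \<comment> \<open>\<open>c x - c y\<close> and \<open>c (x - y) - c 0\<close> are both affine coefficients of \<open>x - y\<close>\<close>
    have "c x i + c 0 i = c (x - y) i + c y i"
      by (rule affine_independent_coefficients_eq[OF fin inj indep _ _ that])
        (use c in \<open>simp_all add: near_def sum.distrib scaleR_add_left\<close>)
    moreover have "\<bar>c (x - y) i - lam i\<bar> \<le> lam i * norm (x - y) / R"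
      using c[of "x - y"] that by (simp add: near_def)
    ultimately show ?thesis using c0[OF that] by simp
  qed
  then have "continuous_on UNIV (\<lambda>w. c w i)" if "i \<in> I" for i
    using that lam(1) \<open>0 < R\<close>
    by (intro lipschitz_on_continuous_on[of "lam i / R"] lipschitz_onI) (auto simp: dist_real_def dist_norm)
  with c c0 show thesis
    by (intro that[of c], unfold_locales) (use fin \<open>0 < R\<close> in \<open>auto simp: near_def\<close>)
qed

context barycentric_chart
begin

lemma center_coord_nonneg:
  assumes "i \<in> I"
  shows "0 \<le> c 0 i"
proof -
  obtain w :: 'a where "norm w = R" using vector_choose_size radius_pos by (metis less_imp_le)
  then show ?thesis using coord_deviation[OF assms, of w] radius_pos by simp
qed

lemma coord_nonneg:
  assumes "norm w \<le> R" "i \<in> I"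
  shows "0 \<le> c w i"
proof -
  have "c 0 i * norm w \<le> c 0 i * R"
    using assms center_coord_nonneg by (intro mult_left_mono) auto
  then have "c 0 i * norm w / R \<le> c 0 i"
    using radius_pos by (simp add: divide_le_eq)
  then show ?thesis using coord_deviation[OF assms(2), of w] by linarith
qed

lemma sum_coord_remove:
  assumes "i \<in> I"
  shows "(\<Sum>j\<in>I - {i}. c w j) = 1 - c w i"
  using sum.remove[OF finite_index assms, of "c w"] sum_coord by simp

lemma coord_combination_remove:
  assumes "i \<in> I"
  shows "(\<Sum>j\<in>I - {i}. c w j *\<^sub>R v j) = w - c w i *\<^sub>R v i"
  using sum.remove[OF finite_index assms, of "\<lambda>j. c w j *\<^sub>R v j"] coord_combination[of w]
  by (simp add: algebra_simps)

lemma coord_le_one: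
  assumes "norm w \<le> R" "i \<in> I"
  shows "c w i \<le> 1"
  using sum_coord_remove[OF assms(2), of w] sum_nonneg[of "I - {i}" "c w"] coord_nonneg[OF assms(1)]
  by force

lemma coord_within_factor_two:
  assumes "norm w \<le> R / 2" "i \<in> I"
  shows "c w i / 2 \<le> c 0 i" "c 0 i \<le> 2 * c w i"
proof -
  have "c 0 i * norm w \<le> c 0 i * (R / 2)"
    using assms center_coord_nonneg by (intro mult_left_mono) auto
  then have "c 0 i * norm w / R \<le> c 0 i / 2"
    using radius_pos by (simp add: divide_le_eq)
  then show "c w i / 2 \<le> c 0 i" "c 0 i \<le> 2 * c w i"
    using coord_deviation[OF assms(2), of w] center_coord_nonneg[OF assms(2)] by linarith+
qed

lemma coord_unique:
  assumes "inj_on v I" "\<not> affine_dependent (v ` I)"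
    and "sum l I = 1" "(\<Sum>i\<in>I. l i *\<^sub>R v i) = w" "i \<in> I"
  shows "c w i = l i"
  using affine_independent_coefficients_eq[OF finite_index assms(1,2) _ _ assms(5)]
    assms(3,4) sum_coord coord_combination by simp

lemma continuous_on_coord [continuous_intros]:
  "i \<in> I \<Longrightarrow> continuous_on S (\<lambda>w. c w i)"
  using continuous_coord continuous_on_subset by blast

lemma rounding_balanced:
  assumes "0 < t" "\<forall>j\<in>I. norm (g j - t *\<^sub>R v j) \<le> M" "2 * M \<le> t * R"
  obtains l where "\<forall>j\<in>I. 0 \<le> l j" "sum l I = 1" "(\<Sum>j\<in>I. l j *\<^sub>R g j) = 0"
    "\<forall>j\<in>I. l j / 2 \<le> c 0 j \<and> c 0 j \<le> 2 * l j"
proof -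
  define F where "F w = - (\<Sum>j\<in>I. c w j *\<^sub>R (g j - t *\<^sub>R v j))" for w
  have "continuous_on (cball 0 (R / 2)) F"
    unfolding F_def by (intro continuous_intros) auto
  moreover have "\<forall>w\<in>cball 0 (R / 2). norm (F w) \<le> t * (R / 2)"
  proof
    fix w :: 'a assume "w \<in> cball 0 (R / 2)"
    have "norm (F w) \<le> sum (c w) I * M"
      unfolding F_def norm_minus_cancel
      using assms(2) \<open>w \<in> cball 0 (R / 2)\<close> radius_pos
      by (intro norm_sum_scaleR_le) (auto intro: coord_nonneg)
    then show "norm (F w) \<le> t * (R / 2)" using sum_coord assms(3) by simp
  qed
  ultimately obtain w where w: "norm w \<le> R / 2" "t *\<^sub>R w = F w"
    using brouwer_scaled_fixed_point[OF assms(1), of "R / 2" F] radius_pos by auto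
  have "(\<Sum>j\<in>I. c w j *\<^sub>R g j) = t *\<^sub>R (\<Sum>j\<in>I. c w j *\<^sub>R v j) - F w"
    by (simp add: F_def scaleR_sum_right algebra_simps flip: sum.distrib)
  also have "\<dots> = 0" using w(2) by (simp add: coord_combination)
  finally show thesis
    using w(1) radius_pos coord_nonneg coord_within_factor_two sum_coord by (intro that) auto
qed

text \<open>The coefficient of \<open>e i\<close> is chosen such that the weights built from a fixed point
  \<open>t w = vertex_shift t e i w\<close> in \<open>vertex_decomposition_of_fixed_point\<close> sum to one.\<close>

definition vertex_shift :: "real \<Rightarrow> ('i \<Rightarrow> 'a) \<Rightarrow> 'i \<Rightarrow> 'a \<Rightarrow> 'a" where
  "vertex_shift t e i w = ((1 - (1 - t) * c w i) / (1 - t)) *\<^sub>R e i - (\<Sum>j\<in>I - {i}. c w j *\<^sub>R e j)"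

lemma continuous_on_vertex_shift:
  "t \<noteq> 1 \<Longrightarrow> i \<in> I \<Longrightarrow> continuous_on S (vertex_shift t e i)"
  unfolding vertex_shift_def by (intro continuous_intros) auto

lemma norm_vertex_shift_le:
  assumes "0 < t" "t \<le> 1 / 2" "\<forall>j\<in>I. norm (e j) \<le> M" "i \<in> I" "norm w \<le> R"
  shows "norm (vertex_shift t e i w) \<le> 3 * M"
proof -
  have ci: "0 \<le> c w i" "c w i \<le> 1"
    using coord_nonneg[OF assms(5,4)] coord_le_one[OF assms(5,4)] .
  have M: "0 \<le> M" using assms(3,4) norm_ge_zero order_trans by blast
  have "0 \<le> (1 - t) * c w i" "(1 - t) * c w i \<le> 1"
    using ci assms(1,2) by (auto intro: mult_le_one)
  then have "\<bar>(1 - (1 - t) * c w i) / (1 - t)\<bar> \<le> 2"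
    using assms(2) by (simp add: divide_le_eq)
  then have "\<bar>(1 - (1 - t) * c w i) / (1 - t)\<bar> * norm (e i) \<le> 2 * M"
    using assms(3,4) by (intro mult_mono') auto
  then have first: "norm (((1 - (1 - t) * c w i) / (1 - t)) *\<^sub>R e i) \<le> 2 * M" by simp
  have "norm (\<Sum>j\<in>I - {i}. c w j *\<^sub>R e j) \<le> sum (c w) (I - {i}) * M"
    using assms(3) coord_nonneg[OF assms(5)] by (intro norm_sum_scaleR_le) auto
  also have "\<dots> = (1 - c w i) * M" by (simp add: sum_coord_remove[OF assms(4)])
  also have "\<dots> \<le> M" using ci M by (simp add: mult_left_le_one_le)
  finally show ?thesis
    unfolding vertex_shift_def using first norm_triangle_ineq4 by (smt (verit))
qed

lemma rounding_vertex_fixed_point: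
  assumes "0 < t" "t \<le> 1 / 2" "\<forall>j\<in>I. norm (g j - t *\<^sub>R v j) \<le> M" "3 * M \<le> t * R" "i \<in> I"
  obtains w where "norm w \<le> R" "t *\<^sub>R w = vertex_shift t (\<lambda>j. g j - t *\<^sub>R v j) i w"
proof (rule brouwer_scaled_fixed_point[OF assms(1) radius_pos])
  show "continuous_on (cball 0 R) (vertex_shift t (\<lambda>j. g j - t *\<^sub>R v j) i)"
    using assms(2,5) by (intro continuous_on_vertex_shift) auto
  show "\<forall>w\<in>cball 0 R. norm (vertex_shift t (\<lambda>j. g j - t *\<^sub>R v j) i w) \<le> t * R"
    using order_trans[OF norm_vertex_shift_le[OF assms(1,2,3,5)] assms(4)] by simp
qed (rule that)

lemma vertex_decomposition_of_fixed_point: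
  assumes "0 < t" "t \<le> 1 / 2" "i \<in> I" "norm w \<le> R"
    and fixed_point: "t *\<^sub>R w = vertex_shift t (\<lambda>j. g j - t *\<^sub>R v j) i w"
  obtains \<mu> where "\<forall>j\<in>I. 0 \<le> \<mu> j" "sum \<mu> I = 1" "t \<le> \<mu> i"
    "g i = \<mu> i *\<^sub>R v i + (\<Sum>j\<in>I - {i}. \<mu> j *\<^sub>R g j)"
proof -
  define k where "k = (1 - (1 - t) * c w i) / (1 - t)"
  define \<beta> where "\<beta> = (1 - t) / (1 - (1 - t) * c w i)"
  have ci: "0 \<le> c w i" "c w i \<le> 1"
    using coord_nonneg[OF assms(4,3)] coord_le_one[OF assms(4,3)] .
  then have "(1 - t) * c w i \<le> 1 - t" using assms(2) by (simp add: mult_left_le)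
  then have "t \<le> 1 - (1 - t) * c w i" by simp
  then have \<beta>: "0 < \<beta>" "\<beta> * k = 1" "\<beta> * (1 - (1 - t) * c w i) = 1 - t"
    using assms(1,2) by (simp_all add: \<beta>_def k_def)
  define \<mu> where "\<mu> j = (if j = i then t + \<beta> * t * c w i else \<beta> * c w j)" for j
  have "(\<Sum>j\<in>I - {i}. c w j *\<^sub>R g j)
      = t *\<^sub>R (\<Sum>j\<in>I - {i}. c w j *\<^sub>R v j) + (\<Sum>j\<in>I - {i}. c w j *\<^sub>R (g j - t *\<^sub>R v j))"
    by (simp add: scaleR_sum_right algebra_simps flip: sum.distrib)
  also have "(\<Sum>j\<in>I - {i}. c w j *\<^sub>R v j) = w - c w i *\<^sub>R v i"
    by (rule coord_combination_remove[OF assms(3)])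
  finally have rest: "(\<Sum>j\<in>I - {i}. c w j *\<^sub>R g j) = k *\<^sub>R (g i - t *\<^sub>R v i) - (t * c w i) *\<^sub>R v i"
    using fixed_point by (simp add: vertex_shift_def k_def algebra_simps)
  show thesis
  proof (rule that)
    show "\<forall>j\<in>I. 0 \<le> \<mu> j"
      using \<beta>(1) assms(1) coord_nonneg[OF assms(4)] by (simp add: \<mu>_def)
    have "sum \<mu> I = \<mu> i + \<beta> * (\<Sum>j\<in>I - {i}. c w j)"
      using sum.remove[OF finite_index assms(3), of \<mu>] by (simp add: \<mu>_def sum_distrib_left)
    also have "\<dots> = t + \<beta> * (1 - (1 - t) * c w i)"
      by (simp add: \<mu>_def sum_coord_remove[OF assms(3)] algebra_simps)
    finally show "sum \<mu> I = 1" using \<beta>(3) by simp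
    show "t \<le> \<mu> i" using \<beta>(1) assms(1) ci by (simp add: \<mu>_def)
    have "(\<Sum>j\<in>I - {i}. \<mu> j *\<^sub>R g j) = \<beta> *\<^sub>R (\<Sum>j\<in>I - {i}. c w j *\<^sub>R g j)"
      by (simp add: \<mu>_def scaleR_sum_right)
    then have "\<mu> i *\<^sub>R v i + (\<Sum>j\<in>I - {i}. \<mu> j *\<^sub>R g j) = t *\<^sub>R v i + (\<beta> * k) *\<^sub>R (g i - t *\<^sub>R v i)"
      by (simp add: rest \<mu>_def algebra_simps)
    then show "g i = \<mu> i *\<^sub>R v i + (\<Sum>j\<in>I - {i}. \<mu> j *\<^sub>R g j)"
      by (simp add: \<beta>(2))
  qed
qed

lemma rounding_vertex_decomposition:
  assumes "0 < t" "t \<le> 1 / 2" "\<forall>j\<in>I. norm (g j - t *\<^sub>R v j) \<le> M" "3 * M \<le> t * R" "i \<in> I"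
  obtains \<mu> where "\<forall>j\<in>I. 0 \<le> \<mu> j" "sum \<mu> I = 1" "t \<le> \<mu> i"
    "g i = \<mu> i *\<^sub>R v i + (\<Sum>j\<in>I - {i}. \<mu> j *\<^sub>R g j)"
proof -
  obtain w where "norm w \<le> R" "t *\<^sub>R w = vertex_shift t (\<lambda>j. g j - t *\<^sub>R v j) i w"
    using rounding_vertex_fixed_point[OF assms] .
  from vertex_decomposition_of_fixed_point[OF assms(1,2,5) this] that show thesis by blast
qed

end

lemma norm_round_diff_le:
  fixes x :: "real^'n"
  shows "norm ((\<chi> k. of_int \<lfloor>x $ k + 1 / 2\<rfloor>) - x) \<le> CARD('n) / 2"
proof -
  have "\<bar>of_int \<lfloor>x $ k + 1 / 2\<rfloor> - x $ k\<bar> \<le> 1 / 2" for k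
    by linarith
  then have "(\<Sum>k\<in>UNIV. \<bar>((\<chi> k. of_int \<lfloor>x $ k + 1 / 2\<rfloor>) - x) $ k\<bar>) \<le> CARD('n) * (1 / 2)"
    by (intro sum_bounded_above) simp
  then show ?thesis using norm_le_l1_cart[of "(\<chi> k. of_int \<lfloor>x $ k + 1 / 2\<rfloor>) - x"] by simp
qed

lemma perturbation_in_scaled_convex:
  fixes P :: "'a::real_normed_vector set"
  assumes "convex P" "ball 0 R \<subseteq> P" "x \<in> P" "0 < t" "0 < R" "3 * norm (y - t *\<^sub>R x) \<le> t * R"
  shows "y \<in> (\<lambda>p. (4 * t) *\<^sub>R p) ` P"
proof
  define q where "q = (1 / (3 * t)) *\<^sub>R (y - t *\<^sub>R x)"
  have "norm (y - t *\<^sub>R x) < 3 * t * R" using assms(6) mult_pos_pos[OF assms(4,5)] by linarith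
  then have "norm q < R" using assms(4) by (simp add: q_def divide_less_eq mult.commute)
  then have "q \<in> P" using assms(2) by auto
  then show "(1 / 4) *\<^sub>R x + (3 / 4) *\<^sub>R q \<in> P"
    using assms(1,3) by (intro convexD) auto
  show "y = (4 * t) *\<^sub>R ((1 / 4) *\<^sub>R x + (3 / 4) *\<^sub>R q)"
    using assms(4) by (simp add: q_def scaleR_add_right)
qed

theorem mainTheorem6:
  fixes v :: "nat \<Rightarrow> real^'n"
  assumes "ball 0 (4 * real CARD('n) ^ 8) \<subseteq> convex hull (v ` {1..CARD('n)+1})"
  shows "\<exists>g :: nat \<Rightarrow> real^'n.
    (\<forall>i\<in>{1..CARD('n)+1}. int_point (g i) \<and>
        g i \<in> (\<lambda>p. (2 / real CARD('n) ^ 2) *\<^sub>R p) ` (convex hull (v ` {1..CARD('n)+1}))) \<and>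
    (\<forall>l\<in>std_simplex (CARD('n)+1). (\<Sum>i=1..CARD('n)+1. l i *\<^sub>R v i) = 0 \<longrightarrow>
        (\<exists>l'\<in>std_simplex (CARD('n)+1). (\<Sum>i=1..CARD('n)+1. l' i *\<^sub>R g i) = 0 \<and>
           (\<forall>i\<in>{1..CARD('n)+1}. l' i / 2 \<le> l i \<and> l i \<le> 2 * l' i))) \<and>
    (\<forall>i\<in>{1..CARD('n)+1}. \<exists>\<mu>\<in>std_simplex (CARD('n)+1).
        \<mu> i \<ge> 1 / (2 * real CARD('n) ^ 2) \<and>
        g i = \<mu> i *\<^sub>R v i + (\<Sum>j\<in>{1..CARD('n)+1} - {i}. \<mu> j *\<^sub>R g j))"
proof -
  let ?d = "CARD('n)" and ?I = "{1..CARD('n)+1}"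
  define R where "R = 4 * real ?d ^ 8"
  define t where "t = 1 / (2 * real ?d ^ 2)"
  define g :: "nat \<Rightarrow> real^'n" where "g i = (\<chi> k. of_int \<lfloor>(t *\<^sub>R v i) $ k + 1 / 2\<rfloor>)" for i
  have R: "0 < R" and t: "0 < t" "t \<le> 1 / 2" and "t * R = 2 * real ?d ^ 6"
    by (auto simp: R_def t_def field_simps simp flip: power_add)
  moreover have "real ?d \<le> real ?d ^ 6" by (simp add: power_increasing[of 1 6, simplified])
  ultimately have size: "3 * (?d / 2) \<le> t * R" by linarith
  have ball: "ball 0 R \<subseteq> convex hull (v ` ?I)" using assms by (simp add: R_def)
  have inj: "inj_on v ?I" and indep: "\<not> affine_dependent (v ` ?I)"
    using simplex_containing_ball_affine_independent[OF _ _ ball R] by simp_all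
  obtain c where "barycentric_chart ?I v c R"
    using barycentric_chart_exists[OF _ inj indep ball R] by blast
  then interpret barycentric_chart ?I v c R .
  have round: "\<forall>i\<in>?I. norm (g i - t *\<^sub>R v i) \<le> ?d / 2"
    unfolding g_def using norm_round_diff_le by blast
  have scaled: "g i \<in> (\<lambda>p. (4 * t) *\<^sub>R p) ` (convex hull (v ` ?I))" if "i \<in> ?I" for i
    using bspec[OF round that] size that
    by (intro perturbation_in_scaled_convex[OF convex_convex_hull ball _ t(1) R, of "v i"]) (auto simp: hull_inc)
  have four_t: "4 * t = 2 / real ?d ^ 2" and int: "int_point (g i)" for i
    by (simp_all add: t_def int_point_def g_def)
  have "2 * (?d / 2) \<le> t * R" using size by linarith
  then obtain l' where l': "\<forall>j\<in>?I. 0 \<le> l' j" "sum l' ?I = 1" "(\<Sum>j\<in>?I. l' j *\<^sub>R g j) = 0"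
    "\<forall>j\<in>?I. l' j / 2 \<le> c 0 j \<and> c 0 j \<le> 2 * l' j"
    using rounding_balanced[OF t(1) round] by blast
  then have balanced: "\<exists>l'\<in>std_simplex (?d + 1). (\<Sum>i=1..?d+1. l' i *\<^sub>R g i) = 0 \<and>
      (\<forall>i\<in>?I. l' i / 2 \<le> l i \<and> l i \<le> 2 * l' i)"
    if "l \<in> std_simplex (?d + 1)" "(\<Sum>i=1..?d+1. l i *\<^sub>R v i) = 0" for l
    using l' coord_unique[OF inj indep _ that(2)] that(1)
    by (intro bexI[of _ l']) (auto simp: std_simplex_def)
  have decomposition: "\<exists>\<mu>\<in>std_simplex (?d + 1). 1 / (2 * real ?d ^ 2) \<le> \<mu> i \<and>
      g i = \<mu> i *\<^sub>R v i + (\<Sum>j\<in>?I - {i}. \<mu> j *\<^sub>R g j)" if i: "i \<in> ?I" for i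
  proof -
    obtain \<mu> where "\<forall>j\<in>?I. 0 \<le> \<mu> j" "sum \<mu> ?I = 1" "t \<le> \<mu> i"
      "g i = \<mu> i *\<^sub>R v i + (\<Sum>j\<in>?I - {i}. \<mu> j *\<^sub>R g j)"
      using rounding_vertex_decomposition[OF t round size i] .
    then show ?thesis by (intro bexI[of _ \<mu>]) (auto simp: std_simplex_def t_def)
  qed
  show ?thesis
    using int scaled[unfolded four_t] balanced decomposition by blast
qed

end
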